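(* Let $m\ge 2$. The Lucas numbers are complete mod $m$ if and only if $m\in\{2,4,6,7,14\}$ or $m=3^j$ for some integer $j\ge1$.
   Context: The Lucas numbers are the sequence $L_1=1$, $L_2=3$, $L_{n+1}=L_{n-1}+L_n$ (so $1,3,4,7,11,18,\dots$). A sequence is complete mod $m$ if every residue class modulo $m$ contains some term of the sequence, and defective mod $m$ otherwise. *)

theory Defs
  imports Main "HOL-Number_Theory.Cong"
begin

text \<open>The value at index 0 is the natural extension L 0 = 2, but it is never used
  by the completeness notion below, which only ranges over indices n \<ge> 1.\<close>
fun lucas :: "nat \<Rightarrow> int" where
  "lucas 0 = 2"
| "lucas (Suc 0) = 1"
| "lucas (Suc (Suc n)) = lucas n + lucas (Suc n)"

definition complete_mod :: "(nat \<Rightarrow> int) \<Rightarrow> int \<Rightarrow> bool" where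
  "complete_mod a m \<longleftrightarrow> (\<forall>r::int. \<exists>n\<ge>1. [a n = r] (mod m))"

end

theory Submission
  imports Defs "HOL-Number_Theory.Number_Theory"
begin

text \<open>
  A prime p > 7 is never a complete modulus. If 5 is a square mod p, then
  L n = a^n + b^n mod p for the two roots a, b of x^2 = x + 1, so by Fermat the
  sequence mod p has period p - 1 and takes at most p - 1 values. If 5 is not a
  square, the identity L n^2 - 5 F n^2 = 4 (-1)^n shows that L n never hits a residue t
  for which t^2 - 4 and t^2 + 4 are both nonzero squares; as one of -1, -7, 7 is a
  square, one of t = 0, 3/2, 8/3 has this property.

  Completeness passes to divisors, so a complete modulus has no prime factors besides
  2, 3, 7, and a finite computation modulo 5, 8, 12, 18, 21, 28 and 49 leaves only
  2, 4, 6, 7, 14 and the powers of 3. Every power of 3 is complete by lifting: for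
  T = 8 * 3^j one has F T = 3^(j+1) f with f prime to 3 and L T = 2 mod 3^(j+2), hence
  L (n + k T) = L n + 3^(j+1) k f F n mod 3^(j+2), and F n is prime to 3 whenever
  4 does not divide n.
\<close>

section \<open>Fibonacci and Lucas identities\<close>

(* Integer-valued, unlike the library's fib, so that identities with subtraction need no casts. *)
fun fib_int :: "nat \<Rightarrow> int" where
  "fib_int 0 = 0"
| "fib_int (Suc 0) = 1"
| "fib_int (Suc (Suc n)) = fib_int n + fib_int (Suc n)"

lemma lucas_eq_fib_int: "lucas n = 2 * fib_int (Suc n) - fib_int n"
  by (induction n rule: fib_int.induct) auto

lemma fib_int_cassini: "fib_int (Suc n)^2 - fib_int (Suc n) * fib_int n - fib_int n^2 = (-1)^n"
  by (induction n) (simp_all add: power2_eq_square algebra_simps)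

lemma lucas_sq_minus_5_fib_int_sq: "lucas n^2 - 5 * fib_int n^2 = 4 * (-1)^n"
  using fib_int_cassini[of n] by (simp add: lucas_eq_fib_int power2_eq_square algebra_simps)

lemma
  shows lucas_add: "2 * lucas (m + n) = lucas m * lucas n + 5 * fib_int m * fib_int n"
    and fib_int_add: "2 * fib_int (m + n) = fib_int m * lucas n + lucas m * fib_int n"
  by (induction m rule: fib_int.induct) (auto simp: lucas_eq_fib_int algebra_simps)

lemma
  shows lucas_triple: "lucas (3 * n) = lucas n^3 - 3 * (-1)^n * lucas n"
    and fib_int_triple: "fib_int (3 * n) = fib_int n * (5 * fib_int n^2 + 3 * (-1)^n)"
proof -
  obtain L F s where LFs: "L = lucas n" "F = fib_int n" "s = (-1::int)^n" by blast
  have sq: "L^2 = 5 * F^2 + 4 * s" and sq': "5 * F^2 = L^2 - 4 * s"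
    using lucas_sq_minus_5_fib_int_sq[of n] unfolding LFs by simp_all
  have L2: "2 * lucas (n + n) = L^2 + 5 * F^2" and F2: "fib_int (n + n) = F * L"
    using lucas_add[of n n] fib_int_add[of n n] unfolding LFs power2_eq_square
    by (simp_all add: algebra_simps)
  have n3: "3 * n = n + n + n" by simp
  have "4 * lucas (3 * n) = (2 * lucas (n + n)) * L + 10 * fib_int (n + n) * F"
    using lucas_add[of "n + n" n] unfolding n3 LFs by simp
  also have "\<dots> = (L^2 + 5 * F^2) * L + 2 * L * (5 * F^2)"
    unfolding L2 F2 by (simp add: algebra_simps power2_eq_square)
  also have "\<dots> = 4 * (L^3 - 3 * s * L)"
    unfolding sq' by (simp add: algebra_simps power2_eq_square power3_eq_cube)
  finally show "lucas (3 * n) = lucas n^3 - 3 * (-1)^n * lucas n"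
    unfolding LFs by simp
  have "4 * fib_int (3 * n) = 2 * fib_int (n + n) * L + (2 * lucas (n + n)) * F"
    using fib_int_add[of "n + n" n] unfolding n3 LFs by simp
  also have "\<dots> = 3 * F * L^2 + 5 * F^3"
    unfolding L2 F2 by (simp add: algebra_simps power2_eq_square power3_eq_cube)
  also have "\<dots> = 4 * (F * (5 * F^2 + 3 * s))"
    unfolding sq by (simp add: algebra_simps power2_eq_square power3_eq_cube)
  finally show "fib_int (3 * n) = fib_int n * (5 * fib_int n^2 + 3 * (-1)^n)"
    unfolding LFs by simp
qed

section \<open>Powers of 3 are complete moduli\<close>

lemma three_dvd_fib_int_iff: "3 dvd fib_int n \<longleftrightarrow> 4 dvd n"
proof (induction n rule: less_induct)
  case (less n)
  show ?case
  proof (cases "n < 4")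
    case True
    then have "n \<in> {0, 1, 2, 3}" by auto
    moreover have "fib_int 2 = 1" "fib_int 3 = 2" by (simp_all add: eval_nat_numeral)
    ultimately show ?thesis by auto
  next
    case False
    then obtain k where n: "n = k + 4" by (metis add.commute le_Suc_ex not_less)
    have "fib_int (k + 4) = 3 * fib_int (k + 1) + 2 * fib_int k"
      by (simp add: eval_nat_numeral)
    then have "3 dvd fib_int n \<longleftrightarrow> 3 dvd fib_int k"
      unfolding n by presburger
    also have "\<dots> \<longleftrightarrow> 4 dvd n"
      using less.IH[of k] unfolding n by presburger
    finally show ?thesis .
  qed
qed

lemma fib_lucas_8_mult_pow3:
  "(\<exists>f. fib_int (8 * 3^j) = 3^(j+1) * f \<and> \<not> 3 dvd f) \<and> [lucas (8 * 3^j) = 2] (mod 3^(j+2))"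
proof (induction j)
  case 0
  show ?case by (auto simp: eval_nat_numeral cong_def intro!: exI[of _ 7])
next
  case (Suc j)
  define m :: nat where "m = 8 * 3^j"
  from Suc.IH obtain f where f: "fib_int m = 3^(j+1) * f" "\<not> 3 dvd f" and
    L: "(3::int)^(j+2) dvd lucas m - 2"
    unfolding m_def by (auto simp: cong_iff_dvd_diff dvd_diff_commute)
  have even: "(-1::int)^m = 1" unfolding m_def by simp
  define f' where "f' = f * (15 * (3^j)^2 * f^2 + 1)"
  have "fib_int (3 * m) = 3^(j+2) * f'"
    using fib_int_triple[of m] unfolding f(1) even f'_def
    by (simp add: algebra_simps power2_eq_square power_add power_mult_distrib)
  moreover have "\<not> 3 dvd f'"
  proof -
    have "\<not> (3::int) dvd 15 * (3^j)^2 * f^2 + 1" by (simp add: dvd_add_right_iff)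
    then show ?thesis unfolding f'_def using f(2) prime_dvd_mult_iff[of "3::int"] by auto
  qed
  moreover have "(3::int)^(Suc j + 2) dvd lucas (3 * m) - 2"
  proof -
    have factor: "lucas (3 * m) - 2 = (lucas m - 2) * (lucas m + 1)^2"
      unfolding lucas_triple even by (simp add: algebra_simps power2_eq_square power3_eq_cube)
    have "(3::int) dvd lucas m - 2"
      using L by (rule dvd_trans[rotated]) simp
    then have "(3::int) dvd lucas m + 1" by presburger
    then have "(3::int)^(j+2) * 3 dvd (lucas m - 2) * (lucas m + 1)^2"
      using L by (intro mult_dvd_mono) (simp_all add: power2_eq_square)
    then show ?thesis unfolding factor by (simp add: power_add ac_simps)
  qed
  moreover have "8 * 3^Suc j = 3 * m" unfolding m_def by simp
  ultimately show ?case
    by (auto simp: cong_iff_dvd_diff dvd_diff_commute)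
qed

lemma lucas_shift_cong:
  assumes F: "fib_int T = 3^(j+1) * f" and L: "[lucas T = 2] (mod 3^(j+2))"
  shows "[lucas (n + T) = lucas n + 3^(j+1) * (f * fib_int n)] (mod 3^(j+2))"
    and "[fib_int (n + T) = fib_int n] (mod 3)"
proof -
  obtain g where g: "lucas T - 2 = 3^(j+2) * g"
    using L by (auto simp: cong_iff_dvd_diff dvd_diff_commute elim: dvdE)
  define D where "D = lucas (n + T) - (lucas n + 3^(j+1) * (f * fib_int n))"
  have "2 * D = 3^(j+2) * (g * lucas n + f * fib_int n)"
    using lucas_add[of n T] F g unfolding D_def by (simp add: algebra_simps)
  then have "(3::int)^(j+2) dvd 2 * D"
    by simp
  moreover have "coprime ((3::int)^(j+2)) 2"
    by simp
  ultimately have "(3::int)^(j+2) dvd D"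
    by (simp add: coprime_dvd_mult_right_iff)
  then show "[lucas (n + T) = lucas n + 3^(j+1) * (f * fib_int n)] (mod 3^(j+2))"
    unfolding D_def by (simp add: cong_iff_dvd_diff dvd_diff_commute)
  have "2 * (fib_int (n + T) - fib_int n) = 3 * (3^(j+1) * g * fib_int n + 3^j * f * lucas n)"
    using fib_int_add[of n T] F g by (simp add: algebra_simps)
  then have "3 dvd fib_int (n + T) - fib_int n" by presburger
  then show "[fib_int (n + T) = fib_int n] (mod 3)"
    by (simp add: cong_iff_dvd_diff)
qed

lemma lucas_shift_mult_cong:
  assumes "fib_int T = 3^(j+1) * f" and "[lucas T = 2] (mod 3^(j+2))"
  shows "[lucas (n + k * T) = lucas n + 3^(j+1) * (int k * (f * fib_int n))] (mod 3^(j+2))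
    \<and> [fib_int (n + k * T) = fib_int n] (mod 3)"
proof (induction k)
  case 0
  show ?case by simp
next
  case (Suc k)
  let ?n = "n + k * T"
  have "[3^(j+1) * (f * fib_int ?n) = 3^(j+1) * (f * fib_int n)] (mod 3^(j+1) * 3)"
    using Suc.IH by (intro cong_cmult_leftI cong_scalar_left) blast
  then have "[lucas ?n + 3^(j+1) * (f * fib_int ?n) = lucas ?n + 3^(j+1) * (f * fib_int n)] (mod 3^(j+2))"
    by (intro cong_add) simp_all
  then have "[lucas (?n + T) = lucas ?n + 3^(j+1) * (f * fib_int n)] (mod 3^(j+2))"
    using lucas_shift_cong(1)[OF assms, of ?n] by (blast intro: cong_trans)
  moreover have "[lucas ?n + 3^(j+1) * (f * fib_int n)
      = lucas n + 3^(j+1) * (int k * (f * fib_int n)) + 3^(j+1) * (f * fib_int n)] (mod 3^(j+2))"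
    using Suc.IH by (intro cong_add) simp_all
  ultimately have "[lucas (?n + T) = lucas n + 3^(j+1) * (int (Suc k) * (f * fib_int n))] (mod 3^(j+2))"
    by (auto simp: algebra_simps dest: cong_trans)
  moreover have "[fib_int (?n + T) = fib_int n] (mod 3)"
    using lucas_shift_cong(2)[OF assms, of ?n] Suc.IH by (blast intro: cong_trans)
  ultimately show ?case by (simp add: algebra_simps)
qed

lemma lucas_surj_mod_pow3: "\<exists>n. \<not> 4 dvd n \<and> [lucas n = r] (mod 3^(j+1))"
proof (induction j arbitrary: r)
  case 0
  have "r mod 3 \<in> {0, 1, 2}" by auto
  moreover have "lucas 2 = 3" "lucas 1 = 1" "lucas 5 = 11" by (simp_all add: eval_nat_numeral)
  ultimately show ?case
    by (auto simp: cong_def intro: exI[of _ "2::nat"] exI[of _ "1::nat"] exI[of _ "5::nat"])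
next
  case (Suc j)
  define T :: nat where "T = 8 * 3^j"
  obtain f where f: "fib_int T = 3^(j+1) * f" "\<not> 3 dvd f" and L: "[lucas T = 2] (mod 3^(j+2))"
    using fib_lucas_8_mult_pow3[of j] unfolding T_def by blast
  obtain n where n: "\<not> 4 dvd n" "[lucas n = r] (mod 3^(j+1))"
    using Suc.IH by blast
  have "(3::int)^(j+1) dvd r - lucas n"
    using n(2) by (simp add: cong_iff_dvd_diff dvd_diff_commute)
  then obtain q where "r - lucas n = 3^(j+1) * q" ..
  then have q: "r = lucas n + 3^(j+1) * q" by simp
  have "\<not> 3 dvd f * fib_int n"
    using f(2) n(1) three_dvd_fib_int_iff[of n] by (simp add: prime_dvd_mult_iff)
  then have "coprime 3 (f * fib_int n)"
    by (rule prime_imp_coprime[rotated]) simp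
  then obtain e where e: "[f * fib_int n * e = 1] (mod 3)"
    using cong_solve_coprime_int coprime_commute by blast
  define k where "k = nat ((q * e) mod 3)"
  have "[int k = q * e] (mod 3)"
    unfolding k_def by (simp add: cong_def)
  then have "[int k * (f * fib_int n) = q * e * (f * fib_int n)] (mod 3)"
    by (rule cong_scalar_right)
  also have "[q * e * (f * fib_int n) = q] (mod 3)"
    using cong_scalar_left[OF e, of q] by (simp add: ac_simps)
  finally have "[3^(j+1) * (int k * (f * fib_int n)) = 3^(j+1) * q] (mod 3^(j+1) * 3)"
    by (rule cong_cmult_leftI)
  then have "[lucas n + 3^(j+1) * (int k * (f * fib_int n)) = r] (mod 3^(j+2))"
    unfolding q by (intro cong_add) simp_all
  then have "[lucas (n + k * T) = r] (mod 3^(Suc j + 1))"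
    using lucas_shift_mult_cong[OF f(1) L, of n k] by (auto intro: cong_trans)
  moreover have "\<not> 4 dvd n + k * T"
    using n(1) unfolding T_def by (simp add: dvd_add_left_iff)
  ultimately show ?case by blast
qed

lemma complete_mod_lucas_pow3:
  assumes "0 < j"
  shows "complete_mod lucas (3^j)"
  unfolding complete_mod_def
proof
  fix r :: int
  obtain n where n: "\<not> 4 dvd n" "[lucas n = r] (mod 3^(j - 1 + 1))"
    using lucas_surj_mod_pow3 by blast
  moreover from n(1) have "1 \<le> n"
    by (cases n) auto
  ultimately show "\<exists>n\<ge>1. [lucas n = r] (mod 3^j)"
    using assms by auto
qed

section \<open>Small moduli by computation\<close>

(* The pair (L n mod d, L (n+1) mod d) evolves under lucas_step; collecting the first
   components of an orbit in one pass keeps the computations below cheap for code_simp. *)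
definition lucas_step :: "int \<Rightarrow> int \<times> int \<Rightarrow> int \<times> int" where
  "lucas_step d = (\<lambda>(a, b). (b, (a + b) mod d))"

fun orbit_heads :: "int \<Rightarrow> nat \<Rightarrow> int \<times> int \<Rightarrow> int list" where
  "orbit_heads d 0 s = []"
| "orbit_heads d (Suc k) s = fst s # orbit_heads d k (lucas_step d s)"

lemma set_orbit_heads: "set (orbit_heads d k s) = (\<lambda>i. fst ((lucas_step d ^^ i) s)) ` {..<k}"
proof (induction k arbitrary: s)
  case 0
  show ?case by simp
next
  case (Suc k)
  show ?case
    unfolding lessThan_Suc_eq_insert_0 using Suc.IH[of "lucas_step d s"]
    by (simp add: image_image funpow_Suc_right del: funpow.simps)
qed

lemma lucas_step_iterate:
  "(lucas_step d ^^ k) (lucas n mod d, lucas (Suc n) mod d)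
     = (lucas (n + k) mod d, lucas (Suc (n + k)) mod d)"
  by (induction k) (simp_all add: lucas_step_def mod_add_eq)

lemma complete_mod_lucas_iff_orbit:
  assumes "0 < d" and "0 < P"
    and period: "(lucas_step d ^^ P) (1 mod d, 3 mod d) = (1 mod d, 3 mod d)"
  shows "complete_mod lucas d \<longleftrightarrow> set [0..d - 1] \<subseteq> set (orbit_heads d P (1 mod d, 3 mod d))"
proof -
  let ?s = "(1 mod d, 3 mod d)"
  have heads: "lucas (Suc i) mod d = fst ((lucas_step d ^^ i) ?s)" for i
    using lucas_step_iterate[where k = i and n = "Suc 0"] by simp
  have residues: "(\<exists>n\<ge>1. lucas n mod d = x) \<longleftrightarrow> x \<in> set (orbit_heads d P ?s)" for x
  proof
    assume "\<exists>n\<ge>1. lucas n mod d = x"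
    then obtain n where "1 \<le> n" "lucas n mod d = x"
      by blast
    then obtain i where "lucas (Suc i) mod d = x"
      by (cases n) auto
    then have "fst ((lucas_step d ^^ (i mod P)) ?s) = x"
      unfolding heads funpow_mod_eq[OF period] .
    then show "x \<in> set (orbit_heads d P ?s)"
      unfolding set_orbit_heads using \<open>0 < P\<close> by force
  next
    assume "x \<in> set (orbit_heads d P ?s)"
    then obtain i where "fst ((lucas_step d ^^ i) ?s) = x"
      unfolding set_orbit_heads by blast
    then show "\<exists>n\<ge>1. lucas n mod d = x"
      unfolding heads[symmetric] by (intro exI[of _ "Suc i"]) simp
  qed
  show ?thesis
    unfolding complete_mod_def cong_def
  proof (intro iffI subsetI allI)
    fix r
    assume "\<forall>r. \<exists>n\<ge>1. lucas n mod d = r mod d" and "r \<in> set [0..d - 1]"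
    moreover from this(2) have "r mod d = r"
      by simp
    ultimately show "r \<in> set (orbit_heads d P ?s)"
      unfolding residues[symmetric] by metis
  next
    fix r
    assume "set [0..d - 1] \<subseteq> set (orbit_heads d P ?s)"
    moreover have "r mod d \<in> set [0..d - 1]"
      using \<open>0 < d\<close> by simp
    ultimately show "\<exists>n\<ge>1. lucas n mod d = r mod d"
      unfolding residues by blast
  qed
qed

(* 48 is a period of the pair sequence modulo each of the following moduli except 49,
   where the period is 112. *)
lemma complete_mod_lucas_small:
  "complete_mod lucas 2" "complete_mod lucas 4" "complete_mod lucas 6"
  "complete_mod lucas 7" "complete_mod lucas 14"
  by (subst complete_mod_lucas_iff_orbit[where P = 48]; code_simp)+

lemma not_complete_mod_lucas_small:
  "\<not> complete_mod lucas 5" "\<not> complete_mod lucas 8" "\<not> complete_mod lucas 12"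
  "\<not> complete_mod lucas 18" "\<not> complete_mod lucas 21" "\<not> complete_mod lucas 28"
  by (subst complete_mod_lucas_iff_orbit[where P = 48]; code_simp)+

lemma not_complete_mod_lucas_49: "\<not> complete_mod lucas 49"
  by (subst complete_mod_lucas_iff_orbit[where P = 112]; code_simp)

section \<open>Primes greater than 7 are defective\<close>

lemma fermat_theorem_int:
  assumes "prime p" and "\<not> int p dvd x"
  shows "[x ^ (p - 1) = 1] (mod int p)"
proof -
  define a where "a = nat (x mod int p)"
  have "0 < int p"
    using assms(1) prime_gt_0_nat by simp
  then have x_a: "[x = int a] (mod int p)"
    unfolding a_def by (simp add: cong_def)
  have "\<not> p dvd a"
    using assms(2) x_a by (metis cong_dvd_iff int_dvd_int_iff)
  then have "[a ^ (p - 1) = 1] (mod p)"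
    by (rule fermat_theorem[OF assms(1)])
  then have "[int a ^ (p - 1) = 1] (mod int p)"
    by (metis cong_int_iff of_nat_1 of_nat_power)
  with x_a show ?thesis
    by (meson cong_pow cong_trans)
qed

lemma not_complete_mod_if_periodic:
  fixes a :: "nat \<Rightarrow> int"
  assumes "0 < P" and "int P < m" and period: "\<And>n. [a (n + P) = a n] (mod m)"
  shows "\<not> complete_mod a m"
proof
  assume complete: "complete_mod a m"
  have shift: "[a (i + k * P) = a i] (mod m)" for i k
  proof (induction k)
    case (Suc k)
    have "i + Suc k * P = (i + k * P) + P"
      by simp
    then show ?case
      using period[of "i + k * P"] Suc.IH by (metis cong_trans)
  qed simp
  have reduce: "[a n = a (n mod P)] (mod m)" for n
    using shift[of "n mod P" "n div P"] by (simp add: cong_sym)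
  define S where "S = (\<lambda>k. a k mod m) ` {..<P}"
  have "card S \<le> P"
    unfolding S_def by (metis card_image_le card_lessThan finite_lessThan)
  also have "P < card {0..<m}"
    using assms(2) by simp
  finally have "card S < card {0..<m}" .
  moreover have "finite S"
    unfolding S_def by simp
  ultimately have "\<not> {0..<m} \<subseteq> S"
    using card_mono by (metis not_le)
  then obtain r where r: "r \<in> {0..<m}" "r \<notin> S"
    by blast
  obtain n where "[a n = r] (mod m)"
    using complete unfolding complete_mod_def by blast
  then have "a (n mod P) mod m = r"
    using reduce[of n] r(1) by (simp add: cong_def)
  then have "r \<in> S"
    unfolding S_def using \<open>0 < P\<close> by force
  with r(2) show False ..
qed

lemma lucas_cong_sum_powers:
  fixes m a b :: int
  assumes sum: "[a + b = 1] (mod m)" and prod: "[a * b = -1] (mod m)"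
  shows "[lucas n = a ^ n + b ^ n] (mod m)"
proof (induction n rule: lucas.induct)
  case 1
  show ?case by simp
next
  case 2
  show ?case using sum by (simp add: cong_sym)
next
  case (3 n)
  have root: "[x ^ 2 = x + 1] (mod m)" if "x = a \<or> x = b" for x
  proof -
    have "x ^ 2 = x * (a + b) - a * b"
      using that by (auto simp: algebra_simps power2_eq_square)
    also have "[\<dots> = x * 1 - (-1)] (mod m)"
      using sum prod by (intro cong_diff cong_mult) auto
    finally show ?thesis by simp
  qed
  have "[a ^ n * a ^ 2 + b ^ n * b ^ 2 = a ^ n * (a + 1) + b ^ n * (b + 1)] (mod m)"
    using root by (intro cong_add cong_mult) auto
  then have "[a ^ Suc (Suc n) + b ^ Suc (Suc n) = lucas n + lucas (Suc n)] (mod m)"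
    using cong_add[OF "3.IH"(1) "3.IH"(2)]
    by (simp add: power2_eq_square algebra_simps) (meson cong_sym cong_trans)
  then show ?case
    by (simp add: cong_sym)
qed

lemma QuadRes_5_imp_roots:
  assumes "prime p" and "2 < p" and "QuadRes (int p) 5"
  obtains a b where "[a + b = 1] (mod int p)" and "[a * b = -1] (mod int p)"
proof -
  obtain s where s: "[s ^ 2 = 5] (mod int p)"
    using assms(3) unfolding QuadRes_def by blast
  have "odd p"
    using assms(1,2) prime_odd_nat by blast
  then have "coprime 2 (int p)"
    by simp
  then obtain h where h: "[2 * h = 1] (mod int p)"
    using cong_solve_coprime_int by blast
  define a b where "a = (1 + s) * h" and "b = (1 - s) * h"
  have "[a + b = 2 * h] (mod int p)"
    unfolding a_def b_def by (simp add: algebra_simps)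
  then have sum: "[a + b = 1] (mod int p)"
    using h by (rule cong_trans)
  have "a * b = h ^ 2 - s ^ 2 * h ^ 2"
    unfolding a_def b_def by (simp add: algebra_simps power2_eq_square)
  also have "[\<dots> = h ^ 2 - 5 * h ^ 2] (mod int p)"
    using s by (intro cong_diff cong_mult) auto
  also have "h ^ 2 - 5 * h ^ 2 = - ((2 * h) ^ 2)"
    by (simp add: power_mult_distrib)
  also have "[\<dots> = - (1 ^ 2)] (mod int p)"
    using h by (intro cong_minus_minus_iff[THEN iffD2] cong_pow)
  finally show ?thesis
    using that sum by simp
qed

lemma not_complete_mod_lucas_if_QuadRes_5:
  assumes "prime p" and "2 < p" and "QuadRes (int p) 5"
  shows "\<not> complete_mod lucas (int p)"
proof -
  obtain a b where sum: "[a + b = 1] (mod int p)" and prod: "[a * b = -1] (mod int p)"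
    using QuadRes_5_imp_roots[OF assms] .
  have "\<not> int p dvd a * b"
  proof
    assume "int p dvd a * b"
    then have "int p dvd 1"
      using prod by (simp add: cong_dvd_iff)
    then show False
      using assms(2) by simp
  qed
  then have "\<not> int p dvd a" and "\<not> int p dvd b"
    by (auto simp: dvd_mult dvd_mult2)
  then have fermat: "[a ^ (p - 1) = 1] (mod int p)" "[b ^ (p - 1) = 1] (mod int p)"
    using fermat_theorem_int[OF assms(1)] by blast+
  have "[lucas (n + (p - 1)) = lucas n] (mod int p)" for n
  proof -
    have "[lucas (n + (p - 1)) = a ^ n * a ^ (p - 1) + b ^ n * b ^ (p - 1)] (mod int p)"
      using lucas_cong_sum_powers[OF sum prod, of "n + (p - 1)"] by (simp add: power_add)
    also have "[a ^ n * a ^ (p - 1) + b ^ n * b ^ (p - 1) = a ^ n * 1 + b ^ n * 1] (mod int p)"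
      using fermat by (intro cong_add cong_mult) auto
    also have "[a ^ n * 1 + b ^ n * 1 = lucas n] (mod int p)"
      using lucas_cong_sum_powers[OF sum prod] by (simp add: cong_sym)
    finally show ?thesis .
  qed
  then show ?thesis
    using assms(2) by (intro not_complete_mod_if_periodic[of "p - 1"]) auto
qed

lemma euler_criterion_nonresidue:
  assumes "prime p" and "2 < p" and "\<not> QuadRes (int p) a"
  shows "[a ^ ((p - 1) div 2) = -1] (mod int p)"
proof -
  have "\<not> [a = 0] (mod int p)"
    using assms(3) unfolding QuadRes_def by (metis cong_sym power_zero_numeral)
  then have "Legendre a (int p) = -1"
    using assms(3) unfolding Legendre_def by simp
  then show ?thesis
    using euler_criterion[OF assms(1,2), of a] by (simp add: cong_sym)
qed

lemma QuadRes_mult_nonresidues: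
  assumes "prime p" and "2 < p" and "\<not> QuadRes (int p) a" and "\<not> QuadRes (int p) b"
  shows "QuadRes (int p) (a * b)"
proof (rule ccontr)
  let ?e = "(p - 1) div 2"
  assume "\<not> QuadRes (int p) (a * b)"
  then have "[(a * b) ^ ?e = -1] (mod int p)"
    by (rule euler_criterion_nonresidue[OF assms(1,2)])
  moreover have "[(a * b) ^ ?e = (-1) * (-1)] (mod int p)"
    unfolding power_mult_distrib
    using euler_criterion_nonresidue[OF assms(1,2)] assms(3,4) by (intro cong_mult) auto
  ultimately have "[-1 = (-1) * (-1)] (mod int p)"
    by (meson cong_sym cong_trans)
  then have "int p dvd 2"
    by (simp add: cong_iff_dvd_diff)
  with assms(2) show False
    by (auto dest: zdvd_imp_le)
qed

lemma QuadRes_if_cong_square_mult: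
  fixes p :: int
  assumes "prime p" and "\<not> p dvd w" and "[c ^ 2 * a = w ^ 2] (mod p)"
  shows "QuadRes p a"
proof -
  have "\<not> p dvd c"
    using assms by (metis cong_dvd_iff dvd_mult2 prime_dvd_power_iff zero_less_numeral)
  then have "coprime p c"
    by (rule prime_imp_coprime[OF assms(1)])
  then obtain e where e: "[c * e = 1] (mod p)"
    using cong_solve_coprime_int coprime_commute by blast
  have "[(c * e) ^ 2 * a = 1 ^ 2 * a] (mod p)"
    using e by (intro cong_mult cong_pow) auto
  then have "[a = e ^ 2 * (c ^ 2 * a)] (mod p)"
    by (simp add: cong_sym power_mult_distrib ac_simps)
  also have "[e ^ 2 * (c ^ 2 * a) = (e * w) ^ 2] (mod p)"
    using assms(3) by (simp add: cong_scalar_left power_mult_distrib)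
  finally show ?thesis
    unfolding QuadRes_def by (blast intro: cong_sym)
qed

(* The residue missed is u / v. *)
lemma lucas_misses_residue:
  fixes p u v y z :: int
  assumes "prime p" and "\<not> QuadRes p 5"
    and "\<not> p dvd v" and "\<not> p dvd y" and "\<not> p dvd z"
    and y: "[u ^ 2 - 4 * v ^ 2 = y ^ 2] (mod p)" and z: "[u ^ 2 + 4 * v ^ 2 = z ^ 2] (mod p)"
  shows "\<not> complete_mod lucas p"
proof
  assume "complete_mod lucas p"
  have "coprime p v"
    using assms(1,3) by (rule prime_imp_coprime)
  then obtain e where "[v * e = 1] (mod p)"
    using cong_solve_coprime_int coprime_commute by blast
  then have "[v * (e * u) = u] (mod p)"
    using cong_scalar_right[of "v * e" 1 p u] by (simp add: ac_simps)
  then obtain t where "[v * t = u] (mod p)" ..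
  moreover obtain n where "[lucas n = t] (mod p)"
    using \<open>complete_mod lucas p\<close> unfolding complete_mod_def by blast
  ultimately have "[v * lucas n = u] (mod p)"
    by (metis cong_scalar_left cong_trans)
  then have L: "[(v * lucas n) ^ 2 = u ^ 2] (mod p)"
    by (rule cong_pow)
  have key: "(v * fib_int n) ^ 2 * 5 = (v * lucas n) ^ 2 - 4 * (-1) ^ n * v ^ 2"
    using lucas_sq_minus_5_fib_int_sq[of n] by (simp add: algebra_simps power_mult_distrib)
  have "QuadRes p 5"
  proof (cases "even n")
    case True
    have "[(v * fib_int n) ^ 2 * 5 = u ^ 2 - 4 * v ^ 2] (mod p)"
      unfolding key using True L by (simp add: cong_diff)
    then show ?thesis
      using y QuadRes_if_cong_square_mult[OF assms(1,4)] by (meson cong_trans)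
  next
    case False
    have "[(v * fib_int n) ^ 2 * 5 = u ^ 2 + 4 * v ^ 2] (mod p)"
      unfolding key using False L by (simp add: cong_add)
    then show ?thesis
      using z QuadRes_if_cong_square_mult[OF assms(1,5)] by (meson cong_trans)
  qed
  with assms(2) show False ..
qed

lemma not_complete_mod_lucas_if_not_QuadRes_5:
  assumes "prime p" and "7 < p" and "\<not> QuadRes (int p) 5"
  shows "\<not> complete_mod lucas (int p)"
proof -
  have prime: "prime (int p)"
    using assms(1) by simp
  have small: "\<not> int p dvd c" if "0 < c" "c \<le> 7" for c :: int
    using that assms(2) by (auto dest: zdvd_imp_le)
  have nonzero: "\<not> int p dvd y" if "[y ^ 2 = c] (mod int p)" "\<not> int p dvd c" for y c :: int
    using that by (metis cong_dvd_iff dvd_mult2 power2_eq_square)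
  have "QuadRes (int p) (-1) \<or> QuadRes (int p) (-7) \<or> QuadRes (int p) 7"
    using QuadRes_mult_nonresidues[OF assms(1), of "-1" 7] assms(2) by force
  then show ?thesis
  proof (elim disjE)
    assume "QuadRes (int p) (-1)"
    then obtain i where "[i ^ 2 = -1] (mod int p)"
      unfolding QuadRes_def by blast
    then have i: "[(2 * i) ^ 2 = -4] (mod int p)"
      using cong_scalar_left[of _ _ _ 4] by (fastforce simp: power_mult_distrib)
    show ?thesis
    proof (rule lucas_misses_residue[OF prime assms(3), where u = 0 and v = 1 and y = "2 * i" and z = 2])
      show "\<not> int p dvd 1" "\<not> int p dvd 2" "\<not> int p dvd 2 * i"
        using small[of 1] small[of 2] small[of 4] nonzero[OF i] by simp_all
      show "[0 ^ 2 - 4 * 1 ^ 2 = (2 * i) ^ 2] (mod int p)"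
        using i by (simp add: cong_sym)
    qed simp
  next
    assume "QuadRes (int p) (-7)"
    then obtain w where w: "[w ^ 2 = -7] (mod int p)"
      unfolding QuadRes_def by blast
    show ?thesis
    proof (rule lucas_misses_residue[OF prime assms(3), where u = 3 and v = 2 and y = w and z = 5])
      show "\<not> int p dvd 2" "\<not> int p dvd w" "\<not> int p dvd 5"
        using small[of 2] small[of 5] small[of 7] nonzero[OF w] by simp_all
      show "[3 ^ 2 - 4 * 2 ^ 2 = w ^ 2] (mod int p)"
        using w by (simp add: cong_sym)
    qed simp
  next
    assume "QuadRes (int p) 7"
    then obtain w where w: "[w ^ 2 = 7] (mod int p)"
      unfolding QuadRes_def by blast
    have "\<not> int p dvd 2 * w" "\<not> int p dvd 2 * 5"
      using small[of 2] small[of 5] small[of 7] nonzero[OF w]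
      by (subst prime_dvd_mult_iff[OF prime], simp)+
    show ?thesis
    proof (rule lucas_misses_residue[OF prime assms(3), where u = 8 and v = 3 and y = "2 * w" and z = 10])
      show "\<not> int p dvd 3"
        using small[of 3] by simp
      show "[8 ^ 2 - 4 * 3 ^ 2 = (2 * w) ^ 2] (mod int p)"
        using cong_scalar_left[OF w, of 4] by (simp add: power_mult_distrib cong_sym)
    qed (use \<open>\<not> int p dvd 2 * w\<close> \<open>\<not> int p dvd 2 * 5\<close> in simp_all)
  qed
qed

lemma not_complete_mod_lucas_prime:
  assumes "prime p" and "7 < p"
  shows "\<not> complete_mod lucas (int p)"
  using assms not_complete_mod_lucas_if_QuadRes_5 not_complete_mod_lucas_if_not_QuadRes_5
  by (cases "QuadRes (int p) 5") simp_all

section \<open>Classification of the complete moduli\<close>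

lemma complete_mod_dvd: "complete_mod a m \<Longrightarrow> d dvd m \<Longrightarrow> complete_mod a d"
  unfolding complete_mod_def using cong_dvd_modulus by blast

lemma prime_mult_pow3_cases:
  fixes p j :: nat
  assumes "p \<in> {2, 3, 7}" and "\<not> 18 dvd p * 3 ^ j" and "\<not> 21 dvd p * 3 ^ j"
  shows "p * 3 ^ j \<in> {2, 6, 7} \<or> (\<exists>i. p * 3 ^ j = 3 ^ i)"
proof -
  have "j < 2" if "p = 2"
  proof (rule ccontr)
    assume "\<not> j < 2"
    then obtain k where "j = k + 2"
      by (metis add.commute le_Suc_ex not_less)
    with that assms(2) show False
      by (simp add: power_add)
  qed
  moreover have "j = 0" if "p = 7"
  proof (rule ccontr)
    assume "j \<noteq> 0"
    then obtain k where "j = Suc k"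
      using not0_implies_Suc by blast
    with that assms(3) show False
      by simp
  qed
  ultimately show ?thesis
    using assms(1) by (auto simp: less_2_cases_iff intro: exI[of _ "Suc j"])
qed

lemma restricted_divisors_cases:
  fixes n :: nat
  assumes "0 < n"
    and "\<And>p. prime p \<Longrightarrow> p dvd n \<Longrightarrow> p \<in> {2, 3, 7}"
    and "\<And>d. d \<in> {8, 12, 18, 21, 28, 49} \<Longrightarrow> \<not> d dvd n"
  shows "n \<in> {1, 2, 4, 6, 7, 14} \<or> (\<exists>j. n = 3 ^ j)"
  using assms
proof (induction n rule: less_induct)
  case (less n)
  show ?case
  proof (cases "n = 1")
    case False
    then obtain p where p: "prime p" "p dvd n"
      using prime_factor_nat by blast
    then obtain m where n: "n = p * m"
      by (auto elim: dvdE)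
    have p237: "p \<in> {2, 3, 7}"
      using less.prems(2) p by blast
    have "0 < m" "m < n"
      using less.prems(1) prime_gt_1_nat[OF p(1)] unfolding n by auto
    moreover have "m dvd n"
      unfolding n by simp
    ultimately have "m \<in> {1, 2, 4, 6, 7, 14} \<or> (\<exists>j. m = 3 ^ j)"
      using less.prems(2,3) by (intro less.IH) (blast intro: dvd_trans)+
    then show ?thesis
    proof
      assume "m \<in> {1, 2, 4, 6, 7, 14}"
      with p237 have "n \<in> {1, 2, 4, 6, 7, 14} \<or> n = 3"
        using less.prems(3)[of 8] less.prems(3)[of 12] less.prems(3)[of 18]
          less.prems(3)[of 21] less.prems(3)[of 28] less.prems(3)[of 49]
        unfolding n by auto
      then show ?thesis
        by (metis power_one_right)
    next
      assume "\<exists>j. m = 3 ^ j"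
      then obtain j where m: "m = 3 ^ j" ..
      have "\<not> 18 dvd p * 3 ^ j" "\<not> 21 dvd p * 3 ^ j"
        using less.prems(3) unfolding n m by simp_all
      then show ?thesis
        using prime_mult_pow3_cases[OF p237] unfolding n m by auto
    qed
  qed simp
qed

theorem mainTheorem6:
  fixes m :: int
  assumes "m \<ge> 2"
  shows "complete_mod lucas m \<longleftrightarrow>
           (m \<in> {2, 4, 6, 7, 14} \<or> (\<exists>j::nat. j \<ge> 1 \<and> m = 3 ^ j))"
proof
  assume complete: "complete_mod lucas m"
  have "0 \<le> m"
    using assms by simp
  then obtain n where m: "m = int n"
    by (rule nonneg_int_cases)
  have divisors: "complete_mod lucas (int d)" if "d dvd n" for d
    using complete_mod_dvd[OF complete] that unfolding m by simp
  have "n \<in> {1, 2, 4, 6, 7, 14} \<or> (\<exists>j. n = 3 ^ j)"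
  proof (rule restricted_divisors_cases)
    show "0 < n"
      using assms unfolding m by simp
    show "p \<in> {2, 3, 7}" if "prime p" "p dvd n" for p
    proof -
      have "p \<le> 7"
        using not_complete_mod_lucas_prime[OF that(1)] divisors[OF that(2)] by (meson not_le)
      moreover have "p \<noteq> 5"
        using not_complete_mod_lucas_small(1) divisors[OF that(2)] by auto
      moreover have "2 \<le> p" "p \<noteq> 4" "p \<noteq> 6"
        using that(1) prime_ge_2_nat by auto
      ultimately show ?thesis by auto
    qed
    show "\<not> d dvd n" if "d \<in> {8, 12, 18, 21, 28, 49}" for d
      using that divisors[of d] not_complete_mod_lucas_small not_complete_mod_lucas_49 by auto
  qed
  then show "m \<in> {2, 4, 6, 7, 14} \<or> (\<exists>j::nat. j \<ge> 1 \<and> m = 3 ^ j)"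
  proof
    assume "\<exists>j. n = 3 ^ j"
    then obtain j where "n = 3 ^ j" ..
    moreover have "j \<noteq> 0"
      using assms \<open>n = 3 ^ j\<close> unfolding m by (intro notI) simp
    ultimately show ?thesis
      unfolding m by auto
  qed (use assms m in auto)
next
  assume "m \<in> {2, 4, 6, 7, 14} \<or> (\<exists>j::nat. j \<ge> 1 \<and> m = 3 ^ j)"
  then show "complete_mod lucas m"
    using complete_mod_lucas_small complete_mod_lucas_pow3 by auto
qed

end
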